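(* Let $n$ be even and let $v_0,\dots,v_{n+1}\in\mathbb{R}^n$ be hereditarily spanning. Then $dP(v_0,\dots,v_{n+1})=0$.
   Context: For $v_1,\dots,v_n\in\mathbb{R}^n$, $\mathrm{Or}(v_1,\dots,v_n)\in\{-1,0,1\}$ is the sign of $\det(v_1,\dots,v_n)$ (zero if not a basis). Define $P:(\mathbb{R}^n)^{n+1}\to\{-1,0,1\}$ by $P(v_0,\dots,v_n)=\prod_{i=0}^n\mathrm{Or}(v_0,\dots,\widehat{v_i},\dots,v_n)$. A $k$-tuple ($k\ge n$) of vectors in $\mathbb{R}^n$ is hereditarily spanning if every subcollection of $n$ of its elements spans $\mathbb{R}^n$. The coboundary is $dP(v_0,\dots,v_{n+1})=\sum_{i=0}^{n+1}(-1)^iP(v_0,\dots,\widehat{v_i},\dots,v_{n+1})$. *)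

theory Defs
  imports "Jordan_Normal_Form.Determinant" "Jordan_Normal_Form.VS_Connect"
begin

definition omit :: "nat \<Rightarrow> 'a list \<Rightarrow> 'a list" where
  "omit i xs = take i xs @ drop (Suc i) xs"

definition Or :: "nat \<Rightarrow> real vec list \<Rightarrow> real" where
  "Or n vs = sgn (det (mat_of_cols n vs))"

definition P :: "nat \<Rightarrow> real vec list \<Rightarrow> real" where
  "P n vs = (\<Prod>i\<in>{0..n}. Or n (omit i vs))"

definition dP :: "nat \<Rightarrow> real vec list \<Rightarrow> real" where
  "dP n vs = (\<Sum>i\<in>{0..n+1}. (-1)^i * P n (omit i vs))"

definition hereditarily_spanning :: "nat \<Rightarrow> real vec list \<Rightarrow> bool" where
  "hereditarily_spanning n vs \<longleftrightarrow> n \<le> length vs \<and> set vs \<subseteq> carrier_vec n \<and>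
     (\<forall>S. S \<subseteq> {..<length vs} \<and> card S = n \<longrightarrow>
        LinearCombinations.module.span class_ring (module_vec TYPE(real) n) ((\<lambda>i. vs ! i) ` S) = carrier_vec n)"

end

theory Submission
  imports Defs
begin

(* Write v_n = M a and v_(n+1) = M b, where M is the (non-singular)
   matrix with columns v_0, ..., v_(n-1).  By Cramer's rule every maximal minor
   det(v with v_i, v_j omitted), i < j, equals -det M * cross2 (u_i, u_j) for
   explicit plane vectors u_0, ..., u_(n+1) (a planar Gale-type dual; here the
   evenness of n enters).  Hence dP is, up to a global sign, the sum over i of
   the products over j /= i of sgn cross2 (u_i, u_j).  All minors are non-zero,
   so the u_i are pairwise non-parallel, and such a sign sum over an even
   number of plane vectors is zero: removing a suitable pair of vectors
   multiplies it by a sign. *)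

definition cross2 :: "real \<times> real \<Rightarrow> real \<times> real \<Rightarrow> real" where
  "cross2 p q = fst p * snd q - snd p * fst q"

lemma cross2_antisym: "cross2 a b = - cross2 b a"
  unfolding cross2_def by simp

lemma cross2_self: "cross2 a a = 0"
  unfolding cross2_def by simp

definition scale2 :: "real \<Rightarrow> real \<times> real \<Rightarrow> real \<times> real" where
  "scale2 c v = (c * fst v, c * snd v)"

lemma cross2_scale2_left [simp]: "cross2 (scale2 c a) b = c * cross2 a b"
  and cross2_scale2_right [simp]: "cross2 a (scale2 c b) = c * cross2 a b"
  unfolding cross2_def scale2_def by (simp_all add: algebra_simps)

lemma cross2_pluecker: "cross2 p b * cross2 a c = cross2 p a * cross2 b c + cross2 p c * cross2 a b"
  unfolding cross2_def by (simp add: algebra_simps)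

lemma cross2_halfplane_trans:
  assumes "cross2 p a > 0" "cross2 p b > 0" "cross2 p c > 0" "cross2 a b > 0" "cross2 b c > 0"
  shows "cross2 a c > 0"
proof -
  have "cross2 p a * cross2 b c > 0" "cross2 p c * cross2 a b > 0"
    using assms by simp_all
  hence "cross2 p b * cross2 a c > 0" using cross2_pluecker[of p b a c] by linarith
  thus ?thesis using assms(2) by (rule zero_less_mult_pos)
qed

lemma halfplane_extreme:
  assumes fin: "finite J" and ne: "J \<noteq> {}"
    and half: "\<And>j. j \<in> J \<Longrightarrow> cross2 p (w j) > 0"
    and nonpar: "\<And>i j. i \<in> J \<Longrightarrow> j \<in> J \<Longrightarrow> i \<noteq> j \<Longrightarrow> cross2 (w i) (w j) \<noteq> 0"
  obtains q where "q \<in> J" "\<And>j. j \<in> J - {q} \<Longrightarrow> cross2 (w q) (w j) > 0"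
proof -
  define after where "after q = {j\<in>J. cross2 (w q) (w j) > 0}" for q
  have "Max ((\<lambda>j. card (after j)) ` J) \<in> (\<lambda>j. card (after j)) ` J" using fin ne by simp
  then obtain q where qJ: "q \<in> J" and q: "card (after q) = Max ((\<lambda>j. card (after j)) ` J)"
    by auto
  have qmax: "card (after j) \<le> card (after q)" if "j \<in> J" for j
    unfolding q using fin that by simp
  have "cross2 (w q) (w j) > 0" if jJ: "j \<in> J - {q}" for j
  proof (rule ccontr)
    assume "\<not> cross2 (w q) (w j) > 0"
    moreover have "cross2 (w q) (w j) \<noteq> 0" using nonpar jJ qJ by auto
    ultimately have jq: "cross2 (w j) (w q) > 0" using cross2_antisym[of "w q" "w j"] by linarith
    have "after q \<subseteq> after j"
      using cross2_halfplane_trans[OF half half half jq] jJ qJ unfolding after_def by auto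
    moreover have "q \<in> after j - after q" using jq qJ cross2_self[of "w q"] unfolding after_def by auto
    ultimately have "after q \<subset> after j" by blast
    hence "card (after q) < card (after j)" using fin unfolding after_def by (intro psubset_card_mono) auto
    thus False using qmax jJ by force
  qed
  thus ?thesis using qJ that by blast
qed

(* For a sign matrix s, the sum over i of the products of row i off the diagonal.
   Applied to s i j = sgn (cross2 (u i) (u j)) it is the sum that dP reduces to. *)
definition sign_sum :: "('a \<Rightarrow> 'a \<Rightarrow> real) \<Rightarrow> 'a set \<Rightarrow> real" where
  "sign_sum s I = (\<Sum>i\<in>I. \<Prod>j\<in>I - {i}. s i j)"

lemma even_power_of_unit: "even k \<Longrightarrow> (e::real) * e = 1 \<Longrightarrow> e ^ k = 1"
  by (metis dvdE power2_eq_square power_mult power_one)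

(* Reduction step: if the row of q equals the row of p up to the sign s p q,
   then removing p and q multiplies the sign sum by s p q, because the two
   removed rows cancel and every other row changes by the same factor. *)
lemma sign_sum_insert_pair:
  fixes s :: "'a \<Rightarrow> 'a \<Rightarrow> real"
  assumes fin: "finite I" and new: "p \<notin> I" "q \<notin> I" "p \<noteq> q" and ev: "even (card I)"
    and antisym: "\<And>i j. s i j = - s j i"
    and unit: "s p q * s p q = 1" "\<And>i. i \<in> I \<Longrightarrow> e i * e i = 1"
    and row_p: "\<And>i. i \<in> I \<Longrightarrow> s p i = e i"
    and row_q: "\<And>i. i \<in> I \<Longrightarrow> s q i = s p q * e i"
  shows "sign_sum s (insert p (insert q I)) = s p q * sign_sum s I"
proof -
  define E where "E = s p q"
  have term_p: "(\<Prod>j\<in>insert q I. s p j) = E * (\<Prod>i\<in>I. e i)"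
    using fin new row_p by (simp add: E_def cong: prod.cong)
  have term_q: "(\<Prod>j\<in>insert p I. s q j) = - E * (\<Prod>i\<in>I. e i)"
  proof -
    have "(\<Prod>j\<in>insert p I. s q j) = - E * (\<Prod>i\<in>I. E * e i)"
      using fin new row_q antisym[of q p] by (simp add: E_def cong: prod.cong)
    also have "(\<Prod>i\<in>I. E * e i) = E ^ card I * (\<Prod>i\<in>I. e i)"
      by (simp add: prod.distrib)
    finally show ?thesis using even_power_of_unit[OF ev] unit(1) by (simp add: E_def)
  qed
  have term_i: "(\<Prod>j\<in>insert p (insert q I) - {i}. s i j) = E * (\<Prod>j\<in>I - {i}. s i j)"
    if iI: "i \<in> I" for i
  proof -
    have "insert p (insert q I) - {i} = insert p (insert q (I - {i}))" using new iI by auto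
    hence "(\<Prod>j\<in>insert p (insert q I) - {i}. s i j) = (- e i) * (- (E * e i)) * (\<Prod>j\<in>I - {i}. s i j)"
      using fin new iI antisym[of i p] antisym[of i q] row_p row_q by (simp add: E_def)
    thus ?thesis using unit(2)[OF iI] by (simp add: algebra_simps)
  qed
  have "sign_sum s (insert p (insert q I)) =
      (\<Prod>j\<in>insert q I. s p j) + (\<Prod>j\<in>insert p I. s q j) + (\<Sum>i\<in>I. \<Prod>j\<in>insert p (insert q I) - {i}. s i j)"
    unfolding sign_sum_def using fin new by (simp add: insert_Diff_if)
  also have "\<dots> = E * sign_sum s I"
    unfolding term_p term_q sign_sum_def by (simp add: term_i sum_distrib_left)
  finally show ?thesis unfolding E_def .
qed

(* The reduction step is always available for plane vectors: flip all vectors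
   to the side of u p; then the first of them in counterclockwise order, u q,
   has sign row equal to that of u p up to the factor sgn (cross2 (u p) (u q)). *)
lemma planar_extreme_pair:
  fixes u :: "'a \<Rightarrow> real \<times> real"
  assumes fin: "finite I" and pI: "p \<in> I"
    and nonpar: "\<And>i j. i \<in> I \<Longrightarrow> j \<in> I \<Longrightarrow> i \<noteq> j \<Longrightarrow> cross2 (u i) (u j) \<noteq> 0"
    and big: "I \<noteq> {p}"
  obtains q where "q \<in> I - {p}"
    "\<forall>i \<in> I - {p, q}. sgn (cross2 (u q) (u i)) = sgn (cross2 (u p) (u q)) * sgn (cross2 (u p) (u i))"
proof -
  define s where "s i j = sgn (cross2 (u i) (u j))" for i j
  define J where "J = I - {p}"
  have nonpar_p: "cross2 (u p) (u j) \<noteq> 0" if "j \<in> J" for j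
    using nonpar[of p j] pI that unfolding J_def by blast
  have unit: "s p j * s p j = 1" if "j \<in> J" for j
    using nonpar_p[OF that] unfolding s_def by (simp add: sgn_if)
  define w where "w j = scale2 (s p j) (u j)" for j
  have half: "cross2 (u p) (w j) > 0" if "j \<in> J" for j
    using nonpar_p[OF that] unfolding w_def s_def by (simp add: sgn_if)
  have w_cross: "cross2 (w i) (w j) = s p i * s p j * cross2 (u i) (u j)" for i j
    unfolding w_def by simp
  have w_nonpar: "cross2 (w i) (w j) \<noteq> 0" if "i \<in> J" "j \<in> J" "i \<noteq> j" for i j
    using that unit[of i] unit[of j] nonpar[of i j] unfolding w_cross J_def by auto
  have "finite J" "J \<noteq> {}" using fin pI big unfolding J_def by auto
  then obtain q where qJ: "q \<in> J" and q_first: "\<And>j. j \<in> J - {q} \<Longrightarrow> cross2 (w q) (w j) > 0"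
    using halfplane_extreme[of J "u p" w] half w_nonpar by blast
  have row_q: "s q i = s p q * s p i" if iI: "i \<in> I - {p, q}" for i
  proof -
    have "i \<in> J" using iI unfolding J_def by simp
    have "cross2 (u q) (u i) = s p q * s p i * cross2 (w q) (w i)"
      using unit[OF qJ] unit[OF \<open>i \<in> J\<close>] unfolding w_cross by (simp add: algebra_simps)
    moreover have "cross2 (w q) (w i) > 0" using q_first iI unfolding J_def by simp
    ultimately show ?thesis unfolding s_def by (simp add: sgn_mult)
  qed
  show ?thesis
  proof (rule that)
    show "q \<in> I - {p}" using qJ unfolding J_def .
    show "\<forall>i \<in> I - {p, q}. sgn (cross2 (u q) (u i)) = sgn (cross2 (u p) (u q)) * sgn (cross2 (u p) (u i))"
      using row_q unfolding s_def by blast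
  qed
qed

lemma planar_sign_sum_even:
  fixes u :: "'a \<Rightarrow> real \<times> real"
  assumes "finite I" "even (card I)"
    and "\<And>i j. i \<in> I \<Longrightarrow> j \<in> I \<Longrightarrow> i \<noteq> j \<Longrightarrow> cross2 (u i) (u j) \<noteq> 0"
  shows "sign_sum (\<lambda>i j. sgn (cross2 (u i) (u j))) I = 0"
  using assms
proof (induction "card I" arbitrary: I rule: less_induct)
  case less
  let ?s = "\<lambda>i j. sgn (cross2 (u i) (u j))"
  show ?case
  proof (cases "I = {}")
    case True
    thus ?thesis by (simp add: sign_sum_def)
  next
    case False
    then obtain p where pI: "p \<in> I" by auto
    have "I \<noteq> {p}" using less.prems(2) by auto
    with less.prems(1) pI less.prems(3) obtain q where qI: "q \<in> I - {p}"
      and row_q: "\<forall>i \<in> I - {p, q}. ?s q i = ?s p q * ?s p i"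
      by (rule planar_extreme_pair)
    define I' where "I' = I - {p, q}"
    have I_eq: "I = insert p (insert q I')" using pI qI unfolding I'_def by auto
    have finI': "finite I'" using less.prems(1) unfolding I'_def by simp
    have new: "p \<notin> I'" "q \<notin> I'" "p \<noteq> q" using qI unfolding I'_def by auto
    have card_I: "card I = card I' + 2" unfolding I_eq using finI' new by simp
    have ev': "even (card I')" using less.prems(2) card_I by simp
    have unit: "?s i j * ?s i j = 1" if "i \<in> I" "j \<in> I" "i \<noteq> j" for i j
      using less.prems(3)[OF that] by (simp add: sgn_if)
    have "sign_sum ?s I = ?s p q * sign_sum ?s I'"
      unfolding I_eq
    proof (rule sign_sum_insert_pair[OF finI' new ev', where e = "?s p"])
      show "?s i j = - ?s j i" for i j using cross2_antisym[of "u i" "u j"] by (simp add: sgn_minus)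
      show "?s p q * ?s p q = 1" using pI qI by (intro unit) auto
      show "?s p i * ?s p i = 1" if "i \<in> I'" for i using pI that unfolding I'_def by (intro unit) auto
      show "?s q i = ?s p q * ?s p i" if "i \<in> I'" for i using row_q that unfolding I'_def by blast
    qed (rule refl)
    also have "sign_sum ?s I' = 0"
    proof (rule less.hyps[OF _ finI' ev'])
      show "card I' < card I" using card_I by simp
      show "cross2 (u i) (u j) \<noteq> 0" if "i \<in> I'" "j \<in> I'" "i \<noteq> j" for i j
        using less.prems(3) that unfolding I_eq by blast
    qed
    finally show ?thesis by simp
  qed
qed

lemma solve_nonsingular:
  fixes M :: "real mat"
  assumes M: "M \<in> carrier_mat n n" and d: "det M \<noteq> 0" and x: "x \<in> carrier_vec n"
  obtains a where "a \<in> carrier_vec n" "M *\<^sub>v a = x"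
proof -
  obtain B where B: "B \<in> carrier_mat n n" "M * B = 1\<^sub>m n"
    using det_non_zero_imp_unit[OF M d, of n] unfolding Units_def by (auto simp: ring_mat_def)
  have "M *\<^sub>v (B *\<^sub>v x) = (M * B) *\<^sub>v x" by (rule assoc_mult_mat_vec[symmetric, OF M B(1) x])
  also have "\<dots> = x" unfolding B(2) by (rule one_mult_mat_vec[OF x])
  finally have "M *\<^sub>v (B *\<^sub>v x) = x" .
  moreover have "B *\<^sub>v x \<in> carrier_vec n" using B(1) x by (rule mult_mat_vec_carrier)
  ultimately show ?thesis by (rule that[rotated])
qed

lemma mat_of_cols_swap:
  assumes "length L = n" "k < n" "l < n"
  shows "mat_of_cols n (L[k := L ! l, l := L ! k]) = swapcols k l (mat_of_cols n L)"
  by (rule eq_matI) (use assms in \<open>auto simp: mat_of_cols_def mat_swapcols_def nth_list_update\<close>)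

lemma mat_of_cols_update:
  assumes "length L = n" "j < n" "c \<in> carrier_vec n"
  shows "mat_of_cols n (L[j := c]) = replace_col (mat_of_cols n L) c j"
  by (rule eq_matI) (use assms in \<open>auto simp: mat_of_cols_def replace_col_def nth_list_update\<close>)

lemma det_swap_columns:
  fixes L :: "real vec list"
  assumes "length L = n" "k < n" "l < n" "k \<noteq> l"
  shows "det (mat_of_cols n (L[k := L ! l, l := L ! k])) = - det (mat_of_cols n L)"
  unfolding mat_of_cols_swap[OF assms(1-3)] using assms by (intro det_swapcols) auto

lemma det_move_column:
  fixes xs :: "real vec list"
  assumes "length (xs @ z # ys @ zs) = n"
  shows "det (mat_of_cols n (xs @ z # ys @ zs)) = (-1) ^ length ys * det (mat_of_cols n (xs @ ys @ z # zs))"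
  using assms
proof (induction ys arbitrary: xs)
  case Nil
  thus ?case by simp
next
  case (Cons y ys xs)
  let ?k = "length xs" and ?L = "xs @ z # y # ys @ zs"
  have len: "length ?L = n" using Cons.prems by simp
  have swap: "?L[?k := ?L ! Suc ?k, Suc ?k := ?L ! ?k] = (xs @ [y]) @ z # ys @ zs"
    by (simp add: list_update_append nth_append)
  have "det (mat_of_cols n ((xs @ [y]) @ z # ys @ zs)) = - det (mat_of_cols n ?L)"
    unfolding swap[symmetric] using len by (intro det_swap_columns) auto
  moreover have "det (mat_of_cols n ((xs @ [y]) @ z # ys @ zs)) =
      (-1) ^ length ys * det (mat_of_cols n ((xs @ [y]) @ ys @ z # zs))"
    using len by (intro Cons.IH) simp
  ultimately show ?case by simp
qed

lemma det_replace_col_linear: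
  fixes X :: "real mat" and L :: "real vec list"
  assumes X: "X \<in> carrier_mat n n" and j: "j < n"
    and len: "length L = n" and Lc: "set L \<subseteq> carrier_vec n" and b: "b \<in> carrier_vec n"
  shows "det (replace_col X (mat_of_cols n L *\<^sub>v b) j) = (\<Sum>k<n. b $ k * det (replace_col X (L ! k) j))"
proof -
  have expand: "det (replace_col X c j) = (\<Sum>r<n. c $ r * cofactor X r j)" if "c \<in> carrier_vec n" for c
  proof -
    have R: "replace_col X c j \<in> carrier_mat n n" using X by (simp add: replace_col_def)
    have "mat_delete (replace_col X c j) r j = mat_delete X r j" for r
      by (rule eq_matI) (use X j in \<open>auto simp: mat_delete_def replace_col_def\<close>)
    thus ?thesis unfolding laplace_expansion_column[OF R j] using X j that
      by (intro sum.cong) (auto simp: cofactor_def replace_col_def)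
  qed
  have Mb: "(mat_of_cols n L *\<^sub>v b) $ r = (\<Sum>k<n. b $ k * L ! k $ r)" if "r < n" for r
    using that len b by (auto simp: scalar_prod_def mat_of_cols_def lessThan_atLeast0 mult.commute intro!: sum.cong)
  have "det (replace_col X (mat_of_cols n L *\<^sub>v b) j) = (\<Sum>r<n. (\<Sum>k<n. b $ k * L ! k $ r) * cofactor X r j)"
  proof -
    have Mbc: "mat_of_cols n L *\<^sub>v b \<in> carrier_vec n" using len b mat_of_cols_carrier(1)[of n L] by (metis mult_mat_vec_carrier)
    show ?thesis unfolding expand[OF Mbc] by (intro sum.cong refl) (subst Mb, auto)
  qed
  also have "\<dots> = (\<Sum>r<n. \<Sum>k<n. b $ k * (L ! k $ r * cofactor X r j))"
    by (simp add: sum_distrib_right mult.assoc)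
  also have "\<dots> = (\<Sum>k<n. \<Sum>r<n. b $ k * (L ! k $ r * cofactor X r j))"
    by (rule sum.swap)
  also have "\<dots> = (\<Sum>k<n. b $ k * (\<Sum>r<n. L ! k $ r * cofactor X r j))"
    by (simp add: sum_distrib_left)
  also have "\<dots> = (\<Sum>k<n. b $ k * det (replace_col X (L ! k) j))"
    using len Lc by (intro sum.cong refl) (simp add: expand[symmetric] subset_code(1))
  finally show ?thesis .
qed

lemma det_update_col_image:
  fixes L :: "real vec list"
  assumes len: "length L = n" and a: "a \<in> carrier_vec n" and k: "k < n"
  shows "det (mat_of_cols n (L[k := mat_of_cols n L *\<^sub>v a])) = a $ k * det (mat_of_cols n L)"
proof -
  have M: "mat_of_cols n L \<in> carrier_mat n n" using len by auto
  show ?thesis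
    using M a k by (subst mat_of_cols_update[OF len k]) (auto intro!: cramer_lemma_mat)
qed

lemma det_duplicate_column:
  fixes L :: "real vec list"
  assumes len: "length L = n" and Lc: "set L \<subseteq> carrier_vec n" and kj: "k < n" "j < n" "k \<noteq> j"
  shows "det (mat_of_cols n (L[j := L ! k])) = 0"
proof -
  let ?L = "L[j := L ! k]"
  have "?L ! m \<in> carrier_vec n" if "m < n" for m
    using that kj len Lc by (auto simp: nth_list_update)
  hence cols: "col (mat_of_cols n ?L) m = ?L ! m" if "m < n" for m
    using that len by (intro col_mat_of_cols) auto
  show ?thesis
    using cols[OF kj(1)] cols[OF kj(2)] kj len by (intro det_identical_columns[of _ n k j]) auto
qed

lemma det_update_two_cols_images:
  fixes L :: "real vec list" and n :: nat
  defines "M \<equiv> mat_of_cols n L"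
  assumes len: "length L = n" and Lc: "set L \<subseteq> carrier_vec n"
    and a: "a \<in> carrier_vec n" and b: "b \<in> carrier_vec n"
    and i: "i < n" and j: "j < n" and ij: "i \<noteq> j"
  shows "det (mat_of_cols n (L[i := M *\<^sub>v a, j := M *\<^sub>v b])) = (a $ i * b $ j - a $ j * b $ i) * det M"
proof -
  have M: "M \<in> carrier_mat n n" using len unfolding M_def by auto
  have Lk: "L ! k \<in> carrier_vec n" if "k < n" for k using Lc len that by auto
  define L' where "L' = L[i := M *\<^sub>v a]"
  have len': "length L' = n" unfolding L'_def using len by simp
  have L'c: "set L' \<subseteq> carrier_vec n"
    unfolding L'_def using Lc M a by (metis set_update_subset_insert insert_subset subset_trans mult_mat_vec_carrier)
  define X where "X = mat_of_cols n L'"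
  have X: "X \<in> carrier_mat n n" unfolding X_def using len' by auto
  have upd_j: "det (mat_of_cols n (L'[j := c])) = det (replace_col X c j)" if "c \<in> carrier_vec n" for c
    unfolding X_def using mat_of_cols_update[OF len' j that] by simp
  have other: "det (replace_col X (L ! k) j) = 0" if k: "k < n" "k \<noteq> i" "k \<noteq> j" for k
  proof -
    have "L' ! k = L ! k" using k unfolding L'_def by simp
    thus ?thesis using upd_j[OF Lk[OF k(1)]] det_duplicate_column[OF len' L'c k(1) j k(3)] by simp
  qed
  have at_j: "det (replace_col X (L ! j) j) = a $ i * det M"
  proof -
    have "L'[j := L ! j] = L[i := M *\<^sub>v a]" unfolding L'_def using ij by (metis list_update_id nth_list_update_neq)
    thus ?thesis using upd_j[OF Lk[OF j]] det_update_col_image[OF len a i] unfolding M_def by simp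
  qed
  have at_i: "det (replace_col X (L ! i) j) = - (a $ j * det M)"
  proof -
    let ?L2 = "L'[j := L ! i]"
    have swap: "?L2[i := ?L2 ! j, j := ?L2 ! i] = L[j := M *\<^sub>v a]"
      unfolding L'_def using ij i j len by (auto simp: nth_list_update intro!: nth_equalityI)
    have "a $ j * det M = - det (mat_of_cols n ?L2)"
      using det_swap_columns[of ?L2 n i j] det_update_col_image[OF len a j] swap i j ij len'
      unfolding M_def by simp
    thus ?thesis using upd_j[OF Lk[OF i]] by simp
  qed
  have "det (mat_of_cols n (L[i := M *\<^sub>v a, j := M *\<^sub>v b])) = det (replace_col X (M *\<^sub>v b) j)"
    using upd_j[of "M *\<^sub>v b"] M b unfolding L'_def by simp
  also have "\<dots> = (\<Sum>k<n. b $ k * det (replace_col X (L ! k) j))"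
    unfolding M_def by (rule det_replace_col_linear[OF X j len Lc b])
  also have "\<dots> = (\<Sum>k<n. (if k = j then b $ j * (a $ i * det M) else 0) +
                         (if k = i then b $ i * - (a $ j * det M) else 0))"
    using other at_i at_j ij by (intro sum.cong refl) auto
  also have "\<dots> = (a $ i * b $ j - a $ j * b $ i) * det M"
    using i j by (simp add: sum.distrib algebra_simps)
  finally show ?thesis .
qed

(* n spanning vectors of R^n form a non-singular matrix: a vector in the kernel
   of the transpose would be orthogonal to the span, i.e. to all of R^n. *)
lemma det_nonzero_if_spanning:
  fixes W :: "real vec list"
  assumes len: "length W = n" and Wc: "set W \<subseteq> carrier_vec n"
    and span: "LinearCombinations.module.span class_ring (module_vec TYPE(real) n) (set W) = carrier_vec n"
  shows "det (mat_of_cols n W) \<noteq> 0"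
proof
  interpret vec_space "TYPE(real)" n .
  define M where "M = mat_of_cols n W"
  have M: "M \<in> carrier_mat n n" unfolding M_def using len by auto
  assume "det (mat_of_cols n W) = 0"
  hence "det (transpose_mat M) = 0" using det_transpose[OF M] unfolding M_def by simp
  then obtain w where w: "w \<in> carrier_vec n" "w \<noteq> 0\<^sub>v n" "transpose_mat M *\<^sub>v w = 0\<^sub>v n"
    using det_0_iff_vec_prod_zero[of "transpose_mat M" n] M by auto
  have "w \<bullet> y = 0" if y: "y \<in> set W" for y
  proof -
    obtain c where c: "c < n" "y = W ! c" using y len by (auto simp: in_set_conv_nth)
    have yc: "y \<in> carrier_vec n" using Wc y by auto
    have "col M c = y" unfolding M_def c(2) by (rule col_mat_of_cols) (use c len yc in auto)
    hence "y \<bullet> w = 0" using w(3) c M by (metis index_mult_mat_vec index_transpose_mat(2) index_zero_vec(1) row_transpose carrier_matD(2))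
    thus ?thesis using comm_scalar_prod[OF w(1) yc] by simp
  qed
  hence "w \<in> orthogonal_complement (set W)" unfolding orthogonal_complement_def using w(1) by auto
  hence "w \<in> orthogonal_complement (carrier_vec n)"
    using in_orthogonal_complement_span[OF Wc] span by simp
  hence "w $ k = 0" if "k < n" for k
    using scalar_prod_right_unit[OF that, of w] unit_vec_carrier[of n k] w(1)
    unfolding orthogonal_complement_def by force
  hence "w = 0\<^sub>v n" using w(1) by (intro eq_vecI) auto
  thus False using w(2) by simp
qed

lemma length_omit [simp]: "i < length xs \<Longrightarrow> length (omit i xs) = length xs - 1"
  unfolding omit_def by simp

lemma nth_omit: "i < length xs \<Longrightarrow> k < length xs - 1 \<Longrightarrow> omit i xs ! k = xs ! (if k < i then k else Suc k)"
  unfolding omit_def by (auto simp: nth_append min_def)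

lemma set_omit_subset: "set (omit i xs) \<subseteq> set xs"
  unfolding omit_def by (auto dest: in_set_takeD in_set_dropD)

lemma omit_omit:
  assumes "i \<le> k" "Suc k < length xs"
  shows "omit k (omit i xs) = omit i (omit (Suc k) xs)"
  by (rule nth_equalityI) (use assms in \<open>auto simp: nth_omit\<close>)

lemma set_omit_omit:
  assumes ij: "i < j" "j < length xs"
  shows "set (omit i (omit j xs)) = (\<lambda>k. xs ! k) ` ({..<length xs} - {i, j})"
proof -
  define pos where "pos k = (if k < i then k else if Suc k < j then Suc k else Suc (Suc k))" for k
  have len2: "length (omit i (omit j xs)) = length xs - 2" using ij by simp
  have nth2: "omit i (omit j xs) ! k = xs ! pos k" if "k < length xs - 2" for k
    using ij that unfolding pos_def by (auto simp: nth_omit)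
  have "pos ` {..<length xs - 2} = {..<length xs} - {i, j}"
  proof
    show "pos ` {..<length xs - 2} \<subseteq> {..<length xs} - {i, j}" unfolding pos_def using ij by auto
    show "{..<length xs} - {i, j} \<subseteq> pos ` {..<length xs - 2}"
    proof
      fix m assume m: "m \<in> {..<length xs} - {i, j}"
      define k where "k = (if m < i then m else if m < j then m - 1 else m - 2)"
      have "k < length xs - 2" "pos k = m" using m ij unfolding k_def pos_def by auto
      thus "m \<in> pos ` {..<length xs - 2}" by (metis image_eqI lessThan_iff)
    qed
  qed
  moreover have "set (omit i (omit j xs)) = (\<lambda>k. omit i (omit j xs) ! k) ` {..<length xs - 2}"
    using len2 by (auto simp: in_set_conv_nth)
  moreover have "\<dots> = (\<lambda>k. xs ! pos k) ` {..<length xs - 2}"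
    using nth2 by (intro image_cong) auto
  ultimately show ?thesis by (simp add: image_image[symmetric])
qed

lemma omit_omit_append_pair:
  assumes len: "length L = n"
  shows "omit n (omit (Suc n) (L @ [x, y])) = L"
    and "i < n \<Longrightarrow> omit i (omit (Suc n) (L @ [x, y])) = omit i L @ [x]"
    and "i < n \<Longrightarrow> omit i (omit n (L @ [x, y])) = omit i L @ [y]"
    and "i < j \<Longrightarrow> j < n \<Longrightarrow> omit i (omit j (L @ [x, y])) = omit i (omit j L) @ [x, y]"
  using len by (auto simp: omit_def take_append drop_append min_def)

lemma neg_one_power_square: "(-1::real) ^ k * (-1) ^ k = 1"
  by (simp flip: power_add)

lemma neg_one_power_diff:
  assumes "i < j"
  shows "(-1::real) ^ (j - Suc i) = - ((-1) ^ i * (-1) ^ j)"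
proof -
  obtain k where j: "j = Suc (i + k)" using less_imp_Suc_add[OF assms] by blast
  have "(-1::real) ^ i * (-1) ^ j = ((-1) ^ i * (-1) ^ i) * - ((-1) ^ k)"
    unfolding j by (simp add: power_add)
  thus ?thesis unfolding neg_one_power_square using j by simp
qed

lemma det_omit_append_image:
  fixes L :: "real vec list" and n :: nat
  defines "M \<equiv> mat_of_cols n L"
  assumes len: "length L = n" and a: "a \<in> carrier_vec n" and i: "i < n"
  shows "det (mat_of_cols n (omit i L @ [M *\<^sub>v a])) = (-1) ^ (n - Suc i) * (a $ i * det M)"
proof -
  have "L[i := M *\<^sub>v a] = take i L @ (M *\<^sub>v a) # drop (Suc i) L @ []"
    using len i by (simp add: upd_conv_take_nth_drop)
  hence "a $ i * det M = (-1) ^ (n - Suc i) * det (mat_of_cols n (omit i L @ [M *\<^sub>v a]))"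
    using det_update_col_image[OF len a i] det_move_column[of "take i L" "M *\<^sub>v a" "drop (Suc i) L" "[]" n]
      len i unfolding M_def omit_def by simp
  thus ?thesis by (simp flip: power_add)
qed

lemma det_omit_omit_append_images:
  fixes L :: "real vec list" and n :: nat
  defines "M \<equiv> mat_of_cols n L"
  assumes len: "length L = n" and Lc: "set L \<subseteq> carrier_vec n"
    and a: "a \<in> carrier_vec n" and b: "b \<in> carrier_vec n" and ij: "i < j" "j < n"
  shows "det (mat_of_cols n (omit i (omit j L) @ [M *\<^sub>v a, M *\<^sub>v b]))
    = (-1) ^ (j - Suc i) * ((a $ i * b $ j - a $ j * b $ i) * det M)"
proof -
  define x y where "x = M *\<^sub>v a" and "y = M *\<^sub>v b"
  define front mid rest where "front = take i L" and "mid = take (j - Suc i) (drop (Suc i) L)"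
    and "rest = drop (Suc j) L"
  have omit2: "omit i (omit j L) = front @ mid @ rest"
    unfolding front_def mid_def rest_def omit_def using ij len by (simp add: take_drop min_def)
  have upd2: "L[i := x, j := y] = (front @ x # mid) @ y # rest @ []"
    unfolding front_def mid_def rest_def using ij len
    by (intro nth_equalityI) (auto simp: nth_append nth_list_update min_def)
  have len_mid: "length mid = j - Suc i" unfolding mid_def using ij len by simp
  have len_parts: "length front + length mid + length rest + 2 = n"
    unfolding front_def mid_def rest_def using ij len by simp
  have "(a $ i * b $ j - a $ j * b $ i) * det M = det (mat_of_cols n (L[i := x, j := y]))"
    unfolding x_def y_def M_def using det_update_two_cols_images[OF len Lc a b] ij by simp
  also have "\<dots> = (-1) ^ length rest * det (mat_of_cols n (front @ x # (mid @ rest) @ [y]))"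
    unfolding upd2 using len_parts by (subst det_move_column) auto
  also have "\<dots> = (-1) ^ length rest * ((-1) ^ (length mid + length rest) *
      det (mat_of_cols n (omit i (omit j L) @ [x, y])))"
    unfolding omit2 using len_parts by (subst det_move_column) auto
  also have "\<dots> = (-1) ^ (j - Suc i) * det (mat_of_cols n (omit i (omit j L) @ [x, y]))"
    unfolding len_mid by (simp add: power_add)
  finally show ?thesis unfolding x_def y_def by (simp flip: power_add)
qed

(* The plane vectors representing the configuration (a Gale-type dual): with
   v_n = M a and v_(n+1) = M b, where M has columns v_0..v_(n-1), put
   u_k = (-1)^k (a_k, b_k) for k < n, u_n = (-1, 0), u_(n+1) = (0, 1). *)
definition planar_config :: "nat \<Rightarrow> real vec \<Rightarrow> real vec \<Rightarrow> nat \<Rightarrow> real \<times> real" where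
  "planar_config n a b k =
     (if k < n then ((-1) ^ k * a $ k, (-1) ^ k * b $ k) else if k = n then (-1, 0) else (0, 1))"

lemma det_omit_omit_planar:
  fixes vs :: "real vec list" and n :: nat and a b :: "real vec"
  defines "M \<equiv> mat_of_cols n (take n vs)" and "u \<equiv> planar_config n a b"
  assumes ev: "even n" and len: "length vs = n + 2" and vc: "set vs \<subseteq> carrier_vec n"
    and a: "a \<in> carrier_vec n" "M *\<^sub>v a = vs ! n"
    and b: "b \<in> carrier_vec n" "M *\<^sub>v b = vs ! Suc n"
    and ij: "i < j" "j \<le> Suc n"
  shows "det (mat_of_cols n (omit i (omit j vs))) = - det M * cross2 (u i) (u j)"
proof -
  define L where "L = take n vs"
  have vs: "vs = L @ [M *\<^sub>v a, M *\<^sub>v b]" unfolding L_def a(2) b(2)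
    by (rule nth_equalityI) (use len in \<open>auto simp: nth_append less_Suc_eq\<close>)
  have lenL: "length L = n" unfolding L_def using len by simp
  have Lc: "set L \<subseteq> carrier_vec n" unfolding L_def using vc by (meson set_take_subset subset_trans)
  have M: "M = mat_of_cols n L" unfolding M_def L_def ..
  have u_low: "u k = ((-1) ^ k * a $ k, (-1) ^ k * b $ k)" if "k < n" for k
    using that unfolding u_def planar_config_def by simp
  have u_high: "u n = (-1, 0)" "u (Suc n) = (0, 1)" unfolding u_def planar_config_def by simp_all
  have odd_shift: "(-1::real) ^ (n - Suc i) = - ((-1) ^ i)" if "i < n" for i
    using neg_one_power_diff[OF that] ev by simp
  consider "i = n" "j = Suc n" | "i < n" "j = Suc n" | "i < n" "j = n" | "j < n"
    using ij by linarith
  thus ?thesis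
  proof cases
    case 1
    thus ?thesis using omit_omit_append_pair(1)[OF lenL] unfolding vs M
      by (simp add: u_high cross2_def)
  next
    case 2
    thus ?thesis using omit_omit_append_pair(2)[OF lenL] det_omit_append_image[OF lenL a(1)]
      unfolding vs M by (simp add: u_low u_high cross2_def odd_shift)
  next
    case 3
    thus ?thesis using omit_omit_append_pair(3)[OF lenL] det_omit_append_image[OF lenL b(1)]
      unfolding vs M by (simp add: u_low u_high cross2_def odd_shift)
  next
    case 4
    have "i < n" using ij(1) 4 by simp
    thus ?thesis using 4 omit_omit_append_pair(4)[OF lenL ij(1) 4]
        det_omit_omit_append_images[OF lenL Lc a(1) b(1) ij(1) 4]
      unfolding vs M by (simp add: u_low cross2_def neg_one_power_diff[OF ij(1)] algebra_simps)
  qed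
qed

lemma planar_representation:
  fixes vs :: "real vec list"
  assumes ev: "even n" and len: "length vs = n + 2" and vc: "set vs \<subseteq> carrier_vec n"
    and nonsing: "det (mat_of_cols n (take n vs)) \<noteq> 0"
  obtains u :: "nat \<Rightarrow> real \<times> real" and D :: real where
    "\<And>i j. i < j \<Longrightarrow> j \<le> Suc n \<Longrightarrow> det (mat_of_cols n (omit i (omit j vs))) = D * cross2 (u i) (u j)"
proof -
  define M where "M = mat_of_cols n (take n vs)"
  have M: "M \<in> carrier_mat n n" unfolding M_def using len by auto
  have last: "vs ! n \<in> carrier_vec n" "vs ! Suc n \<in> carrier_vec n" using vc len by auto
  obtain a where a: "a \<in> carrier_vec n" "M *\<^sub>v a = vs ! n"
    using solve_nonsingular[OF M _ last(1)] nonsing unfolding M_def by blast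
  obtain b where b: "b \<in> carrier_vec n" "M *\<^sub>v b = vs ! Suc n"
    using solve_nonsingular[OF M _ last(2)] nonsing unfolding M_def by blast
  show ?thesis
    using that[of "- det M" "planar_config n a b"] det_omit_omit_planar[OF ev len vc a[unfolded M_def] b[unfolded M_def]]
    unfolding M_def by blast
qed

lemma hereditarily_spanning_minor_nonzero:
  assumes hs: "hereditarily_spanning n vs" and len: "length vs = n + 2"
    and ij: "i < j" "j \<le> Suc n"
  shows "det (mat_of_cols n (omit i (omit j vs))) \<noteq> 0"
proof (rule det_nonzero_if_spanning)
  show "length (omit i (omit j vs)) = n" using ij len by simp
  show "set (omit i (omit j vs)) \<subseteq> carrier_vec n"
    using set_omit_subset[of i "omit j vs"] set_omit_subset[of j vs] hs
    unfolding hereditarily_spanning_def by blast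
  have j: "j < length vs" using ij len by simp
  have card: "card ({..<length vs} - {i, j}) = n" using ij len by (simp add: card_Diff_subset)
  have span: "\<And>S. S \<subseteq> {..<length vs} \<Longrightarrow> card S = n \<Longrightarrow>
      LinearCombinations.module.span class_ring (module_vec TYPE(real) n) ((\<lambda>k. vs ! k) ` S) = carrier_vec n"
    using hs unfolding hereditarily_spanning_def by blast
  show "LinearCombinations.module.span class_ring (module_vec TYPE(real) n) (set (omit i (omit j vs)))
      = carrier_vec n"
    unfolding set_omit_omit[OF ij(1) j] using card by (intro span) auto
qed

lemma P_omit_as_pair_product:
  assumes len: "length vs = n + 2" and i: "i \<le> Suc n"
  shows "P n (omit i vs) = (\<Prod>j\<in>{0..Suc n} - {i}. Or n (omit (min i j) (omit (max i j) vs)))"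
proof -
  define h where "h k = (if k < i then k else Suc k)" for k
  have bij: "bij_betw h {0..n} ({0..Suc n} - {i})"
    by (rule bij_betw_byWitness[where f' = "\<lambda>m. if m < i then m else m - 1"]) (use i in \<open>auto simp: h_def\<close>)
  have "P n (omit i vs) = (\<Prod>k\<in>{0..n}. Or n (omit (min i (h k)) (omit (max i (h k)) vs)))"
    unfolding P_def using len by (intro prod.cong refl) (auto simp: h_def omit_omit)
  also have "\<dots> = (\<Prod>j\<in>{0..Suc n} - {i}. Or n (omit (min i j) (omit (max i j) vs)))"
    by (rule prod.reindex_bij_betw[OF bij])
  finally show ?thesis .
qed

lemma prod_signs_before:
  assumes "i \<le> m"
  shows "(\<Prod>j\<in>{0..m} - {i}. if j < i then -1 else 1 :: real) = (-1) ^ i"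
proof -
  have "(\<Prod>j\<in>{0..m} - {i}. if j < i then -1 else 1 :: real) = (\<Prod>j\<in>({0..m} - {i}) \<inter> {j. j < i}. -1)"
    by (subst prod.If_cases) auto
  also have "({0..m} - {i}) \<inter> {j. j < i} = {0..<i}" using assms by auto
  finally show ?thesis by simp
qed

(* If all maximal minors are D times planar determinants, dP is, up to a global
   sign, the sign sum of the planar configuration: the signs (-1)^i of the
   coboundary exactly compensate the ordering of each pair (i, j). *)
lemma dP_planar:
  fixes vs :: "real vec list" and u :: "nat \<Rightarrow> real \<times> real" and D :: real
  assumes len: "length vs = n + 2"
    and minors: "\<And>i j. i < j \<Longrightarrow> j \<le> Suc n \<Longrightarrow>
      det (mat_of_cols n (omit i (omit j vs))) = D * cross2 (u i) (u j)"
  shows "dP n vs = sgn D ^ Suc n * sign_sum (\<lambda>i j. sgn (cross2 (u i) (u j))) {0..Suc n}"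
proof -
  let ?s = "\<lambda>i j. sgn (cross2 (u i) (u j))"
  have pair: "Or n (omit (min i j) (omit (max i j) vs)) = sgn D * ((if j < i then -1 else 1) * ?s i j)"
    if "i \<le> Suc n" "j \<le> Suc n" "i \<noteq> j" for i j
  proof (cases "i < j")
    case True
    thus ?thesis using minors[of i j] that unfolding Or_def by (simp add: sgn_mult)
  next
    case False
    hence "j < i" using that by simp
    thus ?thesis using minors[of j i] that cross2_antisym[of "u j" "u i"] unfolding Or_def
      by (simp add: sgn_mult sgn_minus)
  qed
  have summand: "(-1) ^ i * P n (omit i vs) = sgn D ^ Suc n * (\<Prod>j\<in>{0..Suc n} - {i}. ?s i j)"
    if i: "i \<le> Suc n" for i
  proof -
    have "P n (omit i vs) = (\<Prod>j\<in>{0..Suc n} - {i}. sgn D * ((if j < i then -1 else 1) * ?s i j))"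
      unfolding P_omit_as_pair_product[OF len i] using pair i by (intro prod.cong refl) auto
    also have "\<dots> = sgn D ^ Suc n * ((-1) ^ i * (\<Prod>j\<in>{0..Suc n} - {i}. ?s i j))"
      using i by (simp add: prod.distrib prod_signs_before)
    finally show ?thesis using neg_one_power_square[of i] by (simp add: algebra_simps)
  qed
  have "dP n vs = (\<Sum>i\<in>{0..Suc n}. sgn D ^ Suc n * (\<Prod>j\<in>{0..Suc n} - {i}. ?s i j))"
    unfolding dP_def by (intro sum.cong) (auto simp: summand)
  thus ?thesis unfolding sign_sum_def sum_distrib_left .
qed

theorem proposition3p5:
  fixes n :: nat and vs :: "real vec list"
  assumes "even n"
    and "length vs = n + 2"
    and "set vs \<subseteq> carrier_vec n"
    and "hereditarily_spanning n vs"
  shows "dP n vs = 0"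
proof -
  note nonzero = hereditarily_spanning_minor_nonzero[OF assms(4,2)]
  have "omit n (omit (Suc n) vs) = take n vs" using assms(2) by (simp add: omit_def)
  hence "det (mat_of_cols n (take n vs)) \<noteq> 0" using nonzero[of n "Suc n"] by simp
  then obtain u D where minors: "\<And>i j. i < j \<Longrightarrow> j \<le> Suc n \<Longrightarrow>
      det (mat_of_cols n (omit i (omit j vs))) = D * cross2 (u i) (u j)"
    by (rule planar_representation[OF assms(1-3)]) blast
  have "cross2 (u i) (u j) \<noteq> 0" if "i \<in> {0..Suc n}" "j \<in> {0..Suc n}" "i \<noteq> j" for i j
    using that nonzero[of i j] nonzero[of j i] minors[of i j] minors[of j i] cross2_antisym[of "u i" "u j"]
    by (cases "i < j") auto
  hence "sign_sum (\<lambda>i j. sgn (cross2 (u i) (u j))) {0..Suc n} = 0"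
    using assms(1) by (intro planar_sign_sum_even) auto
  thus ?thesis using dP_planar[OF assms(2) minors] by simp
qed

end
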